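(* Let $k\ge 2$ and let $\mathcal{C}$ be the full flag code on $\mathbb{F}_q^{2k}$ constructed from a $k$-spread as described in the context. Let $\mathcal{F}=(\mathcal{F}_1,\ldots,\mathcal{F}_{2k-1})\in\mathcal{C}$ and let $\mathcal{X}=(\mathcal{X}_1,\ldots,\mathcal{X}_{2k-1})$ be a sequence of subspaces with $\mathcal{X}_i\subseteq\mathcal{F}_i$ for all $i$ and $\mathcal{X}_1=\cdots=\mathcal{X}_k=\{0\}$. If $\sum_{i=1}^{2k-1}d_S(\mathcal{F}_i,\mathcal{X}_i)\le k^2-1$, then there exists an index $i$ with $k<i<2k$ such that $\dim\mathcal{X}_i>2(i-k)$.
   Context: $q$ is a prime power; $d_S(\mathcal{U},\mathcal{V})=\dim(\mathcal{U}+\mathcal{V})-\dim(\mathcal{U}\cap\mathcal{V})$. Construction: let $\{\mathcal{S}_1,\ldots,\mathcal{S}_{q^k+1}\}$ be a $k$-spread of $\mathbb{F}_q^{2k}$ (a set of $q^k+1$ $k$-dimensional subspaces pairwise intersecting trivially), with full-rank $k\times 2k$ generator matrices $\mathrm{S}_i$. Let $\mathrm{W}_i=\begin{pmatrix}\mathrm{S}_i\\ \mathrm{S}_{i+1}\end{pmatrix}$ for $i\le q^k$ and $\mathrm{W}_{q^k+1}=\begin{pmatrix}\mathrm{S}_{q^k+1}\\ \mathrm{S}_1\end{pmatrix}$, let $\mathcal{W}_i^{(j)}$ be the row space of the first $j$ rows of $\mathrm{W}_i$, and $\mathcal{C}=\{(\mathcal{W}_i^{(1)},\ldots,\mathcal{W}_i^{(2k-1)}):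 1\le i\le q^k+1\}$. *)

theory Defs
  imports Complex_Main "HOL-Library.Function_Algebras"
begin

text \<open>Vectors of F_q^n are modelled as functions nat => 'a (coordinates 0..n-1,
  zero elsewhere); scalar multiplication is pointwise.\<close>

definition fscale :: "'a::field \<Rightarrow> (nat \<Rightarrow> 'a) \<Rightarrow> (nat \<Rightarrow> 'a)" where
  "fscale c v = (\<lambda>i. c * v i)"

interpretation fvs: vector_space "fscale :: 'a::field \<Rightarrow> _"
  by unfold_locales (auto simp: fscale_def fun_eq_iff algebra_simps)

definition ambient :: "nat \<Rightarrow> (nat \<Rightarrow> 'a::field) set" where
  "ambient n = {v. \<forall>i\<ge>n. v i = 0}"

definition fdim :: "(nat \<Rightarrow> 'a::field) set \<Rightarrow> nat" where
  "fdim U = vector_space.dim fscale U"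

definition fspan :: "(nat \<Rightarrow> 'a::field) set \<Rightarrow> (nat \<Rightarrow> 'a) set" where
  "fspan A = module.span fscale A"

definition fsubspace :: "(nat \<Rightarrow> 'a::field) set \<Rightarrow> bool" where
  "fsubspace U = module.subspace fscale U"

definition subspace_dist :: "(nat \<Rightarrow> 'a::field) set \<Rightarrow> (nat \<Rightarrow> 'a) set \<Rightarrow> nat" where
  "subspace_dist U V = fdim (fspan (U \<union> V)) - fdim (U \<inter> V)"

definition rowspace_prefix :: "(nat \<Rightarrow> nat \<Rightarrow> 'a::field) \<Rightarrow> nat \<Rightarrow> (nat \<Rightarrow> 'a) set" where
  "rowspace_prefix M j = fspan {M r | r. r < j}"

definition is_spread_gen :: "nat \<Rightarrow> (nat \<Rightarrow> nat \<Rightarrow> nat \<Rightarrow> 'a::{finite,field}) \<Rightarrow> bool" where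
  "is_spread_gen k S \<longleftrightarrow>
     (\<forall>i\<in>{1..card (UNIV :: 'a set)^k+1}. (\<forall>r<k. S i r \<in> ambient (2*k))
          \<and> fdim (rowspace_prefix (S i) k) = k) \<and>
     (\<forall>i\<in>{1..card (UNIV :: 'a set)^k+1}. \<forall>j\<in>{1..card (UNIV :: 'a set)^k+1}. i \<noteq> j \<longrightarrow>
          rowspace_prefix (S i) k \<inter> rowspace_prefix (S j) k = {0})"

definition Wmat :: "nat \<Rightarrow> (nat \<Rightarrow> nat \<Rightarrow> nat \<Rightarrow> 'a::{finite,field}) \<Rightarrow> nat \<Rightarrow> nat \<Rightarrow> nat \<Rightarrow> 'a" where
  "Wmat k S i r = (if r < k then S i r
                   else S (if i = card (UNIV :: 'a set)^k + 1 then 1 else i + 1) (r - k))"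

text \<open>The flag code: flags are lists [W_i^(1), ..., W_i^(2k-1)] (entry j-1 is W_i^(j)).\<close>
definition spread_flag_code :: "nat \<Rightarrow> (nat \<Rightarrow> nat \<Rightarrow> nat \<Rightarrow> 'a::{finite,field}) \<Rightarrow> (nat \<Rightarrow> 'a) set list set" where
  "spread_flag_code k S =
     {map (\<lambda>j. rowspace_prefix (Wmat k S i) j) [1..<2*k] | i. i \<in> {1..card (UNIV :: 'a set)^k+1}}"

end

theory Submission
  imports Defs
begin

text \<open>The 2k rows of W_i are those of two spread elements meeting trivially, hence
  linearly independent, so the j-th space F_j of the flag has dimension j and, as X_j lies
  in F_j, d_S(F_j, X_j) = j - dim X_j. If the claim failed, then dim X_j = 0 for j \<le> k and
  dim X_j \<le> 2(j - k) for k < j < 2k, so the j-th distance would be at least min j (2k - j);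
  these minima add up to k^2, exceeding the bound k^2 - 1.\<close>

context vector_space
begin

lemma independent_if_card_le_dim:
  assumes "finite A" "card A \<le> dim A"
  shows "independent A"
proof -
  obtain B where B: "B \<subseteq> A" "independent B" "A \<subseteq> span B" "card B = dim A"
    by (rule basis_exists)
  have "B = A"
    using B(1,4) assms by (metis card_mono card_subset_eq le_antisym)
  with B(2) show ?thesis by simp
qed

lemma independent_Un_if_span_Int_eq_zero:
  assumes "finite B" "independent A" "independent B" "span A \<inter> span B = {0}"
  shows "independent (A \<union> B)"
  using assms
proof (induction B rule: finite_induct)
  case empty
  then show ?case by simp
next
  case (insert b B)
  have indep_B: "independent B" and b_notin: "b \<notin> span B"
    using insert.prems(2) insert.hyps(2) by (auto simp: independent_insert)
  have "span A \<inter> span B = {0}"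
    using insert.prems(3) span_mono[of B "insert b B"] span_zero by auto
  then have IH: "independent (A \<union> B)"
    using insert.IH insert.prems(1) indep_B by blast
  have "b \<notin> span (A \<union> B)"
  proof
    assume "b \<in> span (A \<union> B)"
    then obtain x y where xy: "b = x + y" "x \<in> span A" "y \<in> span B"
      unfolding span_Un by blast
    have "x = b - y" using xy(1) by simp
    also have "\<dots> \<in> span (insert b B)"
      using xy(3) span_mono[of B "insert b B"]
      by (blast intro: span_diff span_base)
    finally have "x = 0" using xy(2) insert.prems(3) by blast
    with xy b_notin show False by simp
  qed
  with IH show ?case by (simp add: independent_insertI)
qed

end

lemma rowspace_prefix_eq_span: "rowspace_prefix M j = fvs.span (M ` {..<j})"
proof -
  have "{M r | r. r < j} = M ` {..<j}" by auto
  then show ?thesis unfolding rowspace_prefix_def fspan_def by simp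
qed

lemma full_rank_rows_independent:
  fixes M :: "nat \<Rightarrow> nat \<Rightarrow> 'a::field"
  assumes "fdim (rowspace_prefix M k) = k"
  shows "inj_on M {..<k}" "fvs.independent (M ` {..<k})"
proof -
  have dim_rows: "fvs.dim (M ` {..<k}) = k"
    using assms by (simp add: fdim_def rowspace_prefix_eq_span)
  show indep: "fvs.independent (M ` {..<k})"
    by (rule fvs.independent_if_card_le_dim) (use dim_rows card_image_le[of "{..<k}" M] in auto)
  have "card (M ` {..<k}) = card {..<k}"
    using fvs.dim_eq_card_independent[OF indep] dim_rows by simp
  then show "inj_on M {..<k}"
    by (simp add: eq_card_imp_inj_on)
qed

lemma fdim_rowspace_prefix:
  fixes M :: "nat \<Rightarrow> nat \<Rightarrow> 'a::field"
  assumes "inj_on M {..<n}" "fvs.independent (M ` {..<n})" "j \<le> n"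
  shows "fdim (rowspace_prefix M j) = j"
proof -
  have "{..<j} \<subseteq> {..<n}" using assms(3) by auto
  then have "fvs.independent (M ` {..<j})" "inj_on M {..<j}"
    using fvs.independent_mono[OF assms(2) image_mono] inj_on_subset[OF assms(1)] by auto
  then show ?thesis
    by (simp add: fdim_def rowspace_prefix_eq_span fvs.dim_eq_card_independent card_image)
qed

lemma Wmat_rows_independent:
  fixes S :: "nat \<Rightarrow> nat \<Rightarrow> nat \<Rightarrow> 'a::{finite,field}"
  assumes spread: "is_spread_gen k S" and i: "i \<in> {1..card (UNIV :: 'a set)^k + 1}"
  shows "inj_on (Wmat k S i) {..<2*k}" "fvs.independent (Wmat k S i ` {..<2*k})"
proof -
  let ?N = "card (UNIV :: 'a set)^k + 1"
  define i' where "i' = (if i = ?N then 1 else i + 1)"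
  have "card (UNIV :: 'a set)^k \<ge> 1"
    by (simp add: finite_UNIV_card_ge_0 Suc_leI)
  then have i': "i' \<in> {1..?N}" "i' \<noteq> i"
    using i by (auto simp: i'_def)
  have spread_rank: "\<forall>m\<in>{1..?N}. (\<forall>r<k. S m r \<in> ambient (2*k))
      \<and> fdim (rowspace_prefix (S m) k) = k"
    using spread unfolding is_spread_gen_def by (rule conjunct1)
  then have full_rank: "fdim (rowspace_prefix (S m) k) = k" if "m \<in> {1..?N}" for m
    using that by simp
  have spread_trivial: "\<forall>m\<in>{1..?N}. \<forall>m'\<in>{1..?N}. m \<noteq> m' \<longrightarrow>
      rowspace_prefix (S m) k \<inter> rowspace_prefix (S m') k = {0}"
    using spread unfolding is_spread_gen_def by (rule conjunct2)
  note rows = full_rank_rows_independent[OF full_rank[OF i]]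
  note rows' = full_rank_rows_independent[OF full_rank[OF i'(1)]]
  have trivial: "fvs.span (S i ` {..<k}) \<inter> fvs.span (S i' ` {..<k}) = {0}"
    using spread_trivial[rule_format, OF i i'(1) i'(2)[symmetric]]
    unfolding rowspace_prefix_eq_span .
  have W_image: "Wmat k S i ` {..<2*k} = S i ` {..<k} \<union> S i' ` {..<k}"
  proof -
    have "{..<2*k} = {..<k} \<union> (\<lambda>r. r + k) ` {..<k}"
    proof (intro equalityI subsetI)
      fix r assume "r \<in> {..<2*k}"
      then show "r \<in> {..<k} \<union> (\<lambda>r. r + k) ` {..<k}"
        by (cases "r < k") (auto simp: image_iff intro!: bexI[of _ "r - k"])
    qed auto
    moreover have "Wmat k S i ` {..<k} = S i ` {..<k}"
      by (rule image_cong) (simp_all add: Wmat_def)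
    moreover have "Wmat k S i ` (\<lambda>r. r + k) ` {..<k} = S i' ` {..<k}"
      unfolding image_image by (rule image_cong) (simp_all add: Wmat_def i'_def)
    ultimately show ?thesis
      by (simp only: image_Un)
  qed
  show indep: "fvs.independent (Wmat k S i ` {..<2*k})"
    unfolding W_image
    by (rule fvs.independent_Un_if_span_Int_eq_zero) (use rows(2) rows'(2) trivial in auto)
  have "S i ` {..<k} \<inter> S i' ` {..<k} = {}"
  proof -
    have "S i ` {..<k} \<inter> S i' ` {..<k} \<subseteq> fvs.span (S i ` {..<k}) \<inter> fvs.span (S i' ` {..<k})"
      by (intro Int_mono fvs.span_superset)
    moreover have "0 \<notin> S i ` {..<k}"
    proof
      assume "0 \<in> S i ` {..<k}"
      then have "fvs.dependent (S i ` {..<k})" by (rule fvs.dependent_zero)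
      with rows(2) show False by contradiction
    qed
    ultimately show ?thesis using trivial by auto
  qed
  then have "card (Wmat k S i ` {..<2*k}) = card {..<2*k}"
    unfolding W_image using rows(1) rows'(1) by (simp add: card_Un_disjoint card_image)
  then show "inj_on (Wmat k S i) {..<2*k}"
    by (simp add: eq_card_imp_inj_on)
qed

lemma spread_flag_code_nth_dim:
  fixes S :: "nat \<Rightarrow> nat \<Rightarrow> nat \<Rightarrow> 'a::{finite,field}"
  assumes "is_spread_gen k S" "F \<in> spread_flag_code k S" "j \<in> {1..2*k-1}"
  shows "fsubspace (F ! (j-1))" "fdim (F ! (j-1)) = j"
proof -
  obtain i where i: "i \<in> {1..card (UNIV :: 'a set)^k + 1}"
    and F: "F = map (rowspace_prefix (Wmat k S i)) [1..<2*k]"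
    using assms(2) unfolding spread_flag_code_def by blast
  have F_nth: "F ! (j-1) = rowspace_prefix (Wmat k S i) j"
    using assms(3) by (auto simp: F)
  show "fsubspace (F ! (j-1))"
    unfolding F_nth rowspace_prefix_def fspan_def fsubspace_def by (rule fvs.subspace_span)
  show "fdim (F ! (j-1)) = j"
    unfolding F_nth using assms(3)
    by (intro fdim_rowspace_prefix[OF Wmat_rows_independent[OF assms(1) i]]) auto
qed

lemma subspace_dist_of_subset:
  assumes "fsubspace U" "X \<subseteq> U"
  shows "subspace_dist U X = fdim U - fdim X"
proof -
  have "fspan (U \<union> X) = U"
    using assms by (simp add: fspan_def fsubspace_def Un_absorb2 fvs.span_eq_iff)
  moreover have "U \<inter> X = X" using assms(2) by blast
  ultimately show ?thesis by (simp add: subspace_dist_def)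
qed

lemma fdim_zero: "fdim {0 :: nat \<Rightarrow> 'a::field} = 0"
  using fvs.dim_span_eq_card_independent[of "{}", unfolded fvs.span_empty]
  by (simp add: fdim_def fvs.independent_empty)

lemma sum_min_mirror_eq_square: "(\<Sum>j=1..2*k-1. min j (2*k - j)) = (k::nat)^2"
proof (cases "k = 0")
  case False
  have split: "{1..2*k-1} = {1..k} \<union> {k+1..2*k-1}" using False by auto
  have "(\<Sum>j=1..2*k-1. min j (2*k - j))
      = (\<Sum>j=1..k. min j (2*k - j)) + (\<Sum>j=k+1..2*k-1. min j (2*k - j))"
    unfolding split by (rule sum.union_disjoint) auto
  also have "\<dots> = (\<Sum>j=1..k. j) + (\<Sum>j=k+1..2*k-1. 2*k - j)"
    by (intro arg_cong2[where f = "(+)"] sum.cong) auto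
  also have "(\<Sum>j=k+1..2*k-1. 2*k - j) = (\<Sum>j=1..k-1. j)"
    by (rule sum.reindex_bij_witness[of _ "\<lambda>j. 2*k - j" "\<lambda>j. 2*k - j"]) auto
  also have "(\<Sum>j=1..k. j) + (\<Sum>j=1..k-1. j) = k^2"
    using double_gauss_sum_from_Suc_0[of k, where ?'a=nat]
      double_gauss_sum_from_Suc_0[of "k-1", where ?'a=nat] False
    by (cases k) (auto simp: power2_eq_square algebra_simps)
  finally show ?thesis .
qed simp

theorem lemma4p12:
  fixes k :: nat
    and S :: "nat \<Rightarrow> nat \<Rightarrow> nat \<Rightarrow> 'a::{finite,field}"
    and F X :: "(nat \<Rightarrow> 'a) set list"
  assumes "k \<ge> 2"
    and "is_spread_gen k S"
    and "F \<in> spread_flag_code k S"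
    and "length X = 2*k - 1"
    and "\<forall>i\<in>{1..2*k-1}. fsubspace (X ! (i-1)) \<and> X ! (i-1) \<subseteq> F ! (i-1)"
    and "\<forall>i\<in>{1..k}. X ! (i-1) = {0}"
    and "(\<Sum>i=1..2*k-1. subspace_dist (F ! (i-1)) (X ! (i-1))) \<le> k^2 - 1"
  shows "\<exists>i. k < i \<and> i < 2*k \<and> fdim (X ! (i-1)) > 2*(i-k)"
proof (rule ccontr)
  assume small: "\<not> ?thesis"
  have "min j (2*k - j) \<le> subspace_dist (F ! (j-1)) (X ! (j-1))" if j: "j \<in> {1..2*k-1}" for j
  proof -
    have "X ! (j-1) \<subseteq> F ! (j-1)" using assms(5) j by blast
    then have "subspace_dist (F ! (j-1)) (X ! (j-1)) = j - fdim (X ! (j-1))"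
      using subspace_dist_of_subset[OF spread_flag_code_nth_dim(1)[OF assms(2,3) j]]
        spread_flag_code_nth_dim(2)[OF assms(2,3) j] by simp
    moreover have "fdim (X ! (j-1)) \<le> (if j \<le> k then 0 else 2*(j-k))"
      using assms(6) small j by (auto simp: fdim_zero not_less)
    ultimately show ?thesis by (auto split: if_split_asm)
  qed
  then have "k^2 \<le> (\<Sum>j=1..2*k-1. subspace_dist (F ! (j-1)) (X ! (j-1)))"
    unfolding sum_min_mirror_eq_square[symmetric] by (rule sum_mono)
  moreover have "k^2 > 0" using assms(1) by simp
  ultimately show False using assms(7) by linarith
qed

end
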